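(* Let $a\in\mathbb{R}^n$. The maximal number of pairwise incomparable (with respect to inclusion) half-spaces of $\mathbb{R}_{\max}^n$ with apex $-a$ is $\binom{n}{\lfloor n/2\rfloor}$.
   Context: $\mathbb{R}_{\max}=\mathbb{R}\cup\{-\infty\}$ with $a\oplus b=\max(a,b)$, $ab=a+b$. A half-space with apex $-a$ (where $a\in\mathbb{R}^n$) is a set of the form $\{x\in\mathbb{R}_{\max}^n:\bigoplus_{i\in I}a_ix_i\le\bigoplus_{j\in J}a_jx_j\}$ where $I,J$ are disjoint sets with $I\cup J=\{1,\dots,n\}$. *)

theory Defs
  imports "HOL-Library.Extended_Real"
begin

text \<open>Max-plus semiring R_max = R \<union> {-\<infinity>}, modelled inside ereal (excluding +\<infinity>).
  Vectors of R_max^n are functions nat \<Rightarrow> ereal with coordinates 0..<n,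
  finite-or-minus-infinity values, and value -\<infinity> outside {..<n} (normalisation).\<close>

definition Rmax_vec :: "nat \<Rightarrow> (nat \<Rightarrow> ereal) set" where
  "Rmax_vec n = {x. (\<forall>i. x i \<noteq> \<infinity>) \<and> (\<forall>i\<ge>n. x i = -\<infinity>)}"

text \<open>Max-plus sum over an index set: (+)-max; the empty max is -\<infinity> (the max-plus zero).\<close>
definition halfspace :: "nat \<Rightarrow> (nat \<Rightarrow> real) \<Rightarrow> nat set \<Rightarrow> nat set \<Rightarrow> (nat \<Rightarrow> ereal) set" where
  "halfspace n a I J = {x \<in> Rmax_vec n.
      (SUP i\<in>I. ereal (a i) + x i) \<le> (SUP j\<in>J. ereal (a j) + x j)}"

definition is_halfspace :: "nat \<Rightarrow> (nat \<Rightarrow> real) \<Rightarrow> (nat \<Rightarrow> ereal) set \<Rightarrow> bool" where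
  "is_halfspace n a H \<longleftrightarrow>
     (\<exists>I J. I \<inter> J = {} \<and> I \<union> J = {..<n} \<and> H = halfspace n a I J)"

definition incomparable_family :: "'a set set \<Rightarrow> bool" where
  "incomparable_family F \<longleftrightarrow> (\<forall>H1\<in>F. \<forall>H2\<in>F. H1 \<subseteq> H2 \<longrightarrow> H1 = H2)"

end

theory Submission
  imports Defs
begin

text \<open>Writing a half-space as \<open>\<Oplus>\<^sub>i\<^sub>\<notin>\<^sub>J a\<^sub>i x\<^sub>i \<le> \<Oplus>\<^sub>j\<^sub>\<in>\<^sub>J a\<^sub>j x\<^sub>j\<close>, the map
  \<open>J \<mapsto> H(J)\<close> is an order embedding of the subsets of \<open>{..<n}\<close> into the half-spaces with
  apex \<open>-a\<close>: it is monotone, and a max-plus unit vector \<open>e\<^sub>j\<close> with \<open>j \<in> J - J'\<close> lies in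
  \<open>H(J)\<close> but not in \<open>H(J')\<close>. Incomparable half-spaces are therefore the same as antichains
  of subsets, and the theorem is Sperner's theorem, proved here via the LYM inequality.\<close>

lemma sum_sum_not_mem_swap:
  fixes g :: "'a set \<Rightarrow> 'b::comm_semiring_1"
  assumes "finite S" "finite F" "F \<subseteq> Pow S"
  shows "(\<Sum>x\<in>S. \<Sum>A\<in>{A\<in>F. x \<notin> A}. g A) = (\<Sum>A\<in>F. of_nat (card S - card A) * g A)"
proof -
  have "(\<Sum>x\<in>S. \<Sum>A\<in>{A\<in>F. x \<notin> A}. g A) = (\<Sum>A\<in>F. \<Sum>x\<in>S. if x \<notin> A then g A else 0)"
    using assms(2) by (simp add: sum.inter_filter sum.swap[of _ S])
  also have "\<dots> = (\<Sum>A\<in>F. \<Sum>x\<in>S - A. g A)"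
  proof (rule sum.cong[OF refl])
    fix A
    have "S - A = {x\<in>S. x \<notin> A}" by blast
    then show "(\<Sum>x\<in>S. if x \<notin> A then g A else 0) = (\<Sum>x\<in>S - A. g A)"
      using assms(1) by (simp only: sum.inter_filter)
  qed
  also have "\<dots> = (\<Sum>A\<in>F. of_nat (card S - card A) * g A)"
  proof (rule sum.cong[OF refl])
    fix A assume "A \<in> F"
    then have "A \<subseteq> S" "finite A" using assms by (auto intro: finite_subset)
    then show "(\<Sum>x\<in>S - A. g A) = of_nat (card S - card A) * g A" by (simp add: card_Diff_subset)
  qed
  finally show ?thesis .
qed

lemma fact_mult_fact_Suc_diff:
  assumes "k \<le> m"
  shows "(Suc m - k) * (fact k * fact (m - k)) = (fact k * fact (Suc m - k) :: nat)"
proof -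
  have "Suc m - k = Suc (m - k)" using assms by simp
  then show ?thesis by (simp add: algebra_simps)
qed

text \<open>Each \<open>A \<subset> S\<close> is counted once for every \<open>x \<in> S - A\<close> when summing the induction
  hypothesis over the antichains \<open>{A \<in> F. x \<notin> A}\<close> of \<open>S - {x}\<close>.\<close>

theorem lubell_yamamoto_meshalkin:
  assumes "finite S" "F \<subseteq> Pow S" "incomparable_family F"
  shows "(\<Sum>A\<in>F. fact (card A) * fact (card S - card A)) \<le> (fact (card S) :: nat)"
  using assms
proof (induction "card S" arbitrary: S F rule: less_induct)
  case less
  have fin_F: "finite F" using less.prems by (meson finite_Pow_iff finite_subset)
  show ?case
  proof (cases "S \<in> F")
    case True
    then have "F = {S}" using less.prems unfolding incomparable_family_def by blast
    then show ?thesis by simp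
  next
    case S_notin: False
    show ?thesis
    proof (cases "S = {}")
      case True
      then have "F = {}" using S_notin less.prems by auto
      then show ?thesis by simp
    next
      case False
      then obtain m where card_S: "card S = Suc m"
        using less.prems(1) by (metis card_gt_0_iff gr0_implies_Suc)
      have card_lt: "card A < card S" if "A \<in> F" for A
        using that S_notin less.prems by (metis PowD psubsetI psubset_card_mono subsetD)
      define g :: "'a set \<Rightarrow> nat" where "g A = fact (card A) * fact (m - card A)" for A
      have IH: "(\<Sum>A\<in>{A\<in>F. x \<notin> A}. g A) \<le> fact m" if "x \<in> S" for x
      proof -
        have "card (S - {x}) = m" using that less.prems(1) card_S by simp
        moreover have "{A\<in>F. x \<notin> A} \<subseteq> Pow (S - {x})" using less.prems(2) by auto
        ultimately show ?thesis
          using less.hyps[of "S - {x}" "{A\<in>F. x \<notin> A}"] less.prems card_S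
          by (simp add: g_def incomparable_family_def)
      qed
      have "(\<Sum>A\<in>F. fact (card A) * fact (card S - card A)) = (\<Sum>A\<in>F. (card S - card A) * g A)"
      proof (rule sum.cong[OF refl])
        fix A assume "A \<in> F"
        then have "card A \<le> m" using card_lt card_S by fastforce
        then show "fact (card A) * fact (card S - card A) = (card S - card A) * g A"
          unfolding g_def card_S by (rule fact_mult_fact_Suc_diff[symmetric])
      qed
      also have "\<dots> = (\<Sum>x\<in>S. \<Sum>A\<in>{A\<in>F. x \<notin> A}. g A)"
        using sum_sum_not_mem_swap[OF less.prems(1) fin_F less.prems(2), of g] by simp
      also have "\<dots> \<le> (\<Sum>x\<in>S. fact m)" by (rule sum_mono) (rule IH)
      also have "\<dots> = fact (card S)" using card_S by simp
      finally show ?thesis .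
    qed
  qed
qed

theorem sperner:
  assumes "finite S" "F \<subseteq> Pow S" "incomparable_family F"
  shows "card F \<le> card S choose (card S div 2)"
proof -
  let ?n = "card S" and ?M = "card S choose (card S div 2)"
  have bound: "fact ?n \<le> fact (card A) * fact (?n - card A) * ?M" if "A \<in> F" for A
  proof -
    have "card A \<le> ?n" using that assms by (meson PowD card_mono subsetD)
    then have "fact ?n = fact (card A) * fact (?n - card A) * (?n choose card A)"
      by (simp add: binomial_fact_lemma)
    also have "\<dots> \<le> fact (card A) * fact (?n - card A) * ?M"
      by (intro mult_left_mono binomial_maximum) simp
    finally show ?thesis .
  qed
  have "card F * fact ?n = (\<Sum>A\<in>F. fact ?n)" by simp
  also have "\<dots> \<le> (\<Sum>A\<in>F. fact (card A) * fact (?n - card A) * ?M)"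
    by (rule sum_mono) (rule bound)
  also have "\<dots> = (\<Sum>A\<in>F. fact (card A) * fact (?n - card A)) * ?M"
    by (simp add: sum_distrib_right)
  also have "\<dots> \<le> fact ?n * ?M"
    using lubell_yamamoto_meshalkin[OF assms] by (rule mult_right_mono) simp
  finally show ?thesis by simp
qed

lemma incomparable_family_layer:
  assumes "finite S"
  shows "incomparable_family {A. A \<subseteq> S \<and> card A = k}"
  unfolding incomparable_family_def
proof (intro ballI impI)
  fix A B assume A: "A \<in> {A. A \<subseteq> S \<and> card A = k}" and B: "B \<in> {A. A \<subseteq> S \<and> card A = k}"
    and "A \<subseteq> B"
  have "finite B" using B finite_subset[OF _ assms] by blast
  moreover have "card A = card B" using A B by simp
  ultimately show "A = B" using \<open>A \<subseteq> B\<close> card_subset_eq by blast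
qed

lemma incomparable_family_image_iff:
  assumes embedding: "\<And>A B. A \<in> D \<Longrightarrow> B \<in> D \<Longrightarrow> f A \<subseteq> f B \<longleftrightarrow> A \<subseteq> B" and "G \<subseteq> D"
  shows "incomparable_family (f ` G) \<longleftrightarrow> incomparable_family G"
proof -
  have emb: "f A \<subseteq> f B \<longleftrightarrow> A \<subseteq> B" if "A \<in> G" "B \<in> G" for A B
    using that \<open>G \<subseteq> D\<close> by (intro embedding) auto
  have "f A = f B \<longleftrightarrow> A = B" if "A \<in> G" "B \<in> G" for A B
    using emb[OF that] emb[OF that(2,1)] by auto
  then show ?thesis
    unfolding incomparable_family_def using emb by (auto simp: image_iff)
qed

lemma inj_on_order_embedding:
  assumes "\<And>A B. A \<in> D \<Longrightarrow> B \<in> D \<Longrightarrow> f A \<subseteq> f B \<longleftrightarrow> A \<subseteq> B"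
  shows "inj_on f D"
proof (rule inj_onI)
  fix A B assume "A \<in> D" "B \<in> D" "f A = f B"
  then show "A = B" using assms[of A B] assms[of B A] by auto
qed

definition halfspace_of :: "nat \<Rightarrow> (nat \<Rightarrow> real) \<Rightarrow> nat set \<Rightarrow> (nat \<Rightarrow> ereal) set" where
  "halfspace_of n a J = halfspace n a ({..<n} - J) J"

lemma is_halfspace_iff_halfspace_of:
  "is_halfspace n a H \<longleftrightarrow> (\<exists>J \<subseteq> {..<n}. H = halfspace_of n a J)"
proof
  assume "is_halfspace n a H"
  then obtain I J where "I \<inter> J = {}" "I \<union> J = {..<n}" "H = halfspace n a I J"
    unfolding is_halfspace_def by blast
  moreover from this have "I = {..<n} - J" by blast
  ultimately show "\<exists>J \<subseteq> {..<n}. H = halfspace_of n a J" unfolding halfspace_of_def by blast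
next
  assume "\<exists>J \<subseteq> {..<n}. H = halfspace_of n a J"
  then obtain J where "J \<subseteq> {..<n}" "H = halfspace_of n a J" by blast
  then show "is_halfspace n a H" unfolding is_halfspace_def halfspace_of_def
    by (intro exI[of _ "{..<n} - J"] exI[of _ J]) auto
qed

lemma halfspace_of_mono:
  assumes "J \<subseteq> J'"
  shows "halfspace_of n a J \<subseteq> halfspace_of n a J'"
proof
  fix x assume x: "x \<in> halfspace_of n a J"
  have "(SUP i\<in>{..<n} - J'. ereal (a i) + x i) \<le> (SUP i\<in>{..<n} - J. ereal (a i) + x i)"
    using assms by (intro SUP_subset_mono) auto
  also have "\<dots> \<le> (SUP j\<in>J. ereal (a j) + x j)" using x by (simp add: halfspace_of_def halfspace_def)
  also have "\<dots> \<le> (SUP j\<in>J'. ereal (a j) + x j)" using assms by (intro SUP_subset_mono) auto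
  finally show "x \<in> halfspace_of n a J'" using x by (simp add: halfspace_of_def halfspace_def)
qed

lemma unit_vector_in_halfspace_of_iff:
  assumes "j < n"
  shows "(\<lambda>i. if i = j then 0 else -\<infinity>) \<in> halfspace_of n a J \<longleftrightarrow> j \<in> J"
proof -
  let ?e = "\<lambda>i. if i = j then 0 else -\<infinity> :: ereal"
  have sup_e: "(SUP i\<in>K. ereal (a i) + ?e i) = (if j \<in> K then ereal (a j) else -\<infinity>)" for K
  proof (cases "j \<in> K")
    case True
    then show ?thesis by (intro SUP_eqI) (auto, metis (full_types) add.right_neutral)
  qed (auto intro!: SUP_eqI)
  have "?e \<in> Rmax_vec n" using assms by (auto simp: Rmax_vec_def)
  then show ?thesis using assms by (auto simp: halfspace_of_def halfspace_def sup_e)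
qed

lemma halfspace_of_subset_iff:
  assumes "J \<subseteq> {..<n}"
  shows "halfspace_of n a J \<subseteq> halfspace_of n a J' \<longleftrightarrow> J \<subseteq> J'"
proof
  assume sub: "halfspace_of n a J \<subseteq> halfspace_of n a J'"
  show "J \<subseteq> J'"
  proof
    fix j assume "j \<in> J"
    then have "j < n" using assms by auto
    then show "j \<in> J'"
      using \<open>j \<in> J\<close> sub unit_vector_in_halfspace_of_iff[of j n] by blast
  qed
qed (rule halfspace_of_mono)

theorem lemma4p7:
  fixes n :: nat and a :: "nat \<Rightarrow> real"
  shows "(\<exists>F. F \<subseteq> {H. is_halfspace n a H} \<and> incomparable_family F
              \<and> card F = n choose (n div 2))
       \<and> (\<forall>F. F \<subseteq> {H. is_halfspace n a H} \<and> incomparable_family F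
              \<longrightarrow> finite F \<and> card F \<le> n choose (n div 2))"
proof (intro conjI allI impI; (elim conjE)?)
  let ?H = "halfspace_of n a"
  have embedding: "?H A \<subseteq> ?H B \<longleftrightarrow> A \<subseteq> B" if "A \<in> Pow {..<n}" for A B
    using that halfspace_of_subset_iff by blast
  have inj: "inj_on ?H (Pow {..<n})" by (rule inj_on_order_embedding) (rule embedding)
  have halfspaces: "{H. is_halfspace n a H} = ?H ` Pow {..<n}"
    by (auto simp: is_halfspace_iff_halfspace_of)
  let ?L = "{J. J \<subseteq> {..<n} \<and> card J = n div 2}"
  show "\<exists>F. F \<subseteq> {H. is_halfspace n a H} \<and> incomparable_family F \<and> card F = n choose (n div 2)"
  proof (intro exI conjI)
    show "?H ` ?L \<subseteq> {H. is_halfspace n a H}" unfolding halfspaces by auto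
    show "incomparable_family (?H ` ?L)"
      using incomparable_family_image_iff[of "Pow {..<n}" ?H ?L, OF embedding]
        incomparable_family_layer[of "{..<n}"] by auto
    show "card (?H ` ?L) = n choose (n div 2)"
      using card_image[OF inj_on_subset[OF inj, of ?L]] n_subsets[of "{..<n}" "n div 2"] by auto
  qed
  fix F assume "F \<subseteq> {H. is_halfspace n a H}" and F: "incomparable_family F"
  then obtain G where G: "G \<subseteq> Pow {..<n}" "F = ?H ` G" unfolding halfspaces subset_image_iff by blast
  show "finite F" using G by (simp add: finite_subset)
  have "card F = card G" using G inj by (simp add: card_image inj_on_subset)
  also have "\<dots> \<le> n choose (n div 2)"
    using sperner[OF _ G(1)] F G(2)
      incomparable_family_image_iff[of "Pow {..<n}" ?H G, OF embedding G(1)] by simp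
  finally show "card F \<le> n choose (n div 2)" .
qed

end
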